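(* Under the good event $E$, the quantity $\widehat\lambda:=\left\|\widehat P\widehat M^{1/2}(\widehat P^\top\widehat f^* )^{\circ-1/2}\right\|_\infty^2$ satisfies $\widehat\lambda\le8\lambda$.
   Context: Two-stage causal MDP. Start state $0$, intermediate states $[k]$, terminal state. At each state $i\in\{0,\dots,k\}$: independent Bernoulli variables $X^i_1,\dots,X^i_n$, $q^i_j=\mathbb{P}\{X^i_j=1\}$ unknown; atomic interventions $\mathcal{I}_i=\{do()\}\cup\{do(X^i_j=0),do(X^i_j=1):j\in[n]\}$, $N=2n+1$ ($do(X^i_j=x)$ sets $X^i_j=x$, other variables drawn independently). Performing $a\in\mathcal{I}_0$ at state $0$ leads to $i\in[k]$ with unknown probability $P_{(a,i)}$ (depending stochastically on the realized $X^0$-values); $P\in\mathbb{R}^{N\times k}$, $p_+=\min\{P_{(a,i)}>0\}$. At state $i\in[k]$, after an intervention all $X^i_j$ and a reward $R_i\in\{0,1\}$ (law depending on the $X^i$-values) are observed; $\mathbb{E}[R_i\mid a]$ is the expected reward under $a\in\mathcal{I}_i$. Causal parameters: with $\bar q^i_j=\min(q^i_j,1-q^i_j)$ sorted as $\bar q^i_{(1)}\le\dots\le\bar q^i_{(n)}$, $m_i=\max\{j:\bar q^i_{(j)}<1/j\}$; $\mathcal{I}_{m_i}$ is the set of interventions setting a variable with $\bar q^i_{(j)}<1/j$ to its less likely value; $M=\mathrm{diag}(m_1,\dots,m_k)$. Frequency vectors: $f\in\mathbb{R}^N$, $f\ge0$, $\sum f_a=1$; $x^{\circ-1/2}$ is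 entrywise $x_i^{-1/2}$; $\lambda=\min_f\|PM^{1/2}(P^\top f)^{\circ-1/2}\|_\infty^2$. Algorithm ALG-CE with budget $T$ (estimates are empirical frequencies/means). Phase 1 ($T/3$ rounds): $T/6$ rounds of $do()$ at state $0$, giving estimates of $q^0_j$, $\widehat m_0$, $\mathcal{I}_{m_0}$, and $\widehat P_{(a,i)}$ for $a\notin\mathcal{I}_{m_0}$ (frequency of reaching $i$ among rounds whose $X^0$-values agree with $a$); then each $a\in\mathcal{I}_{m_0}$ is performed $T/(6|\mathcal{I}_{m_0}|)$ times to get $\widehat P_{(a,i)}$. Phase 2: $\tilde f\in\arg\max_f\min_i(\widehat P^\top f)_i$. Phase 3 ($T/3$ rounds): each $a\in\mathcal{I}_0$ performed $\frac12(\tilde f(a)+\frac1N)\frac T3$ times with $do()$ at the reached state, giving $\widehat m_i$, $\widehat M=\mathrm{diag}(\widehat m_1,\dots,\widehat m_k)$. Phase 4: $\widehat f^*\in\arg\min_f\|\widehat P\widehat M^{1/2}(\widehat P^\top f)^{\circ-1/2}\|_\infty$. Phase 5 ($T/3$ rounds): with $h(a)=\frac13(\widehat f^*(a)+\tilde f(a)+\frac1N)$, each $a$ performed $h(a)T/6$ times with $do()$ at the reached state (estimating $\mathcal{I}_{m_i}$ and $\widehat{\mathcal{R}}_{(b,i)}$ for $b\notin\mathcal{I}_{m_i}$ from rounds whose $X^i$-values agree with $b$), then $h(a)T/6$ times with round-robin over $b\in\mathcal{I}_{m_i}$ at the reached state $i$ (estimating $\widehat{\mathcal{R}}_{(b,i)}$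 for $b\in\mathcal{I}_{m_i}$). Output $\widehat\pi(i)\in\arg\max_b\widehat{\mathcal{R}}_{(b,i)}$, $\widehat\pi(0)\in\arg\max_a\sum_i\widehat P_{(a,i)}\widehat{\mathcal{R}}_{(\widehat\pi(i),i)}$. Good event $E=E_1\cap\dots\cap E_5$: ($E_1$) for every $a\in\mathcal{I}_0$, the transition estimates formed in each of Phases 1, 3, 5 satisfy $\sum_i|\widehat P_{(a,i)}-P_{(a,i)}|\le p_+/3$; ($E_2$) $\widehat m_0\in[\frac23m_0,2m_0]$; ($E_3$) $\widehat m_i\in[\frac23m_i,2m_i]$ for all $i\in[k]$ (for the estimates in Phases 3 and 5); ($E_4$) for all $a\in\mathcal{I}_0$, the Phase 1 estimates satisfy $\sum_i|\widehat P_{(a,i)}-P_{(a,i)}|\le\eta'$ with $\eta'=\sqrt{\frac{150m_0}{Tp_+}\log\frac{3T}{k}}$; ($E_5$) $|\mathbb{E}[R_i\mid a]-\widehat{\mathcal{R}}_{(a,i)}|\le\widehat\eta_i$ for all $i\in[k]$, $a\in\mathcal{I}_i$, with $\widehat\eta_i=\sqrt{\frac{27\widehat m_i}{T(\widehat P^\top\widehat f^* )_i}\log(2TN)}$. Here $\widehat P$ and $\widehat M$ denote the Phase 1 and Phase 3 estimates. *)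

theory Defs
  imports Complex_Main "HOL-Library.Extended_Real"
begin

(* Atomic interventions on n Bernoulli variables X_0..X_{n-1} (0-indexed) *)
datatype intervention = Obs | Do nat bool

definition interventions :: "nat \<Rightarrow> intervention set" where
  "interventions n = {Obs} \<union> {Do j x | j x. j < n}"

definition qbar :: "real \<Rightarrow> real" where
  "qbar x = min x (1 - x)"

definition sorted_qbar :: "(nat \<Rightarrow> real) \<Rightarrow> nat \<Rightarrow> real list" where
  "sorted_qbar q n = sort (map (\<lambda>j. qbar (q j)) [0..<n])"

definition mpar :: "(nat \<Rightarrow> real) \<Rightarrow> nat \<Rightarrow> nat" where
  "mpar q n = Max {j \<in> {1..n}. sorted_qbar q n ! (j - 1) < 1 / real j}"

definition freq_simplex :: "intervention set \<Rightarrow> (intervention \<Rightarrow> real) set" where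
  "freq_simplex I = {f. (\<forall>a\<in>I. 0 \<le> f a) \<and> (\<Sum>a\<in>I. f a) = 1}"

definition pplus :: "intervention set \<Rightarrow> (intervention \<Rightarrow> 's::finite \<Rightarrow> real) \<Rightarrow> real" where
  "pplus I P = Min {P a i | a i. a \<in> I \<and> P a i > 0}"

definition PTf :: "intervention set \<Rightarrow> (intervention \<Rightarrow> 's::finite \<Rightarrow> real)
                   \<Rightarrow> (intervention \<Rightarrow> real) \<Rightarrow> 's \<Rightarrow> real" where
  "PTf I P f i = (\<Sum>a\<in>I. f a * P a i)"

(* entrywise y^{-1/2}, with value +infinity at y = 0 (and the ereal convention 0 * infinity = 0) *)
definition inv_sqrt :: "real \<Rightarrow> ereal" where
  "inv_sqrt y = (if y > 0 then ereal (1 / sqrt y) else \<infinity>)"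

(* || P M^{1/2} (P^T f)^{o -1/2} ||_infty, M = diag(m) *)
definition obj :: "intervention set \<Rightarrow> (intervention \<Rightarrow> 's::finite \<Rightarrow> real)
                   \<Rightarrow> ('s \<Rightarrow> real) \<Rightarrow> (intervention \<Rightarrow> real) \<Rightarrow> ereal" where
  "obj I P m f = Max ((\<lambda>a. \<bar>\<Sum>i\<in>UNIV. ereal (P a i * sqrt (m i)) * inv_sqrt (PTf I P f i)\<bar>) ` I)"

definition lambda_par :: "intervention set \<Rightarrow> (intervention \<Rightarrow> 's::finite \<Rightarrow> real)
                   \<Rightarrow> ('s \<Rightarrow> real) \<Rightarrow> ereal" where
  "lambda_par I P m = (INF f\<in>freq_simplex I. obj I P m f) ^ 2"

end

(*
  Under E1 a single entry of Phat deviates from P by at most p_+/3, which is at most a third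
  of any positive entry of P, and Phat vanishes off the support of P; hence
  2/3 P <= Phat <= 4/3 P entrywise and, for every frequency vector f, Phat^T f >= 2/3 P^T f.
  Together with mhat <= 2 m (E3), every term of the objective for (Phat, mhat) is at most
  c = 4/3 sqrt (2 / (2/3)) times the corresponding term for (P, m), so the estimated objective
  is bounded by c times the true one for every f.  Optimality of fhat transfers this to the
  infimum, and c^2 = 16/3 <= 8.
*)
theory Submission
  imports Defs
begin

lemma finite_interventions: "finite (interventions n)"
proof -
  have "{Do j x | j x. j < n} = (\<lambda>(j, x). Do j x) ` ({..<n} \<times> UNIV)" by auto
  then show ?thesis unfolding interventions_def by simp
qed

lemma Obs_in_interventions: "Obs \<in> interventions n"
  unfolding interventions_def by simp

lemma pplus_le:
  assumes "finite I" "a \<in> I" "0 < P a i"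
  shows "pplus I P \<le> P a i"
proof -
  have "{P a i | a i. a \<in> I \<and> P a i > 0} \<subseteq> (\<Union>a\<in>I. range (P a))" by blast
  moreover have "finite (\<Union>a\<in>I. range (P a))" using assms(1) by simp
  ultimately have "finite {P a i | a i. a \<in> I \<and> P a i > 0}" by (rule finite_subset)
  then show ?thesis unfolding pplus_def using assms(2,3) by (intro Min_le) blast+
qed

lemma entry_bounds_of_l1_close:
  assumes "finite I" "a \<in> I" "0 \<le> P a i" "P a i = 0 \<Longrightarrow> Phat a i = 0" "0 \<le> \<epsilon>"
    and l1: "(\<Sum>j\<in>UNIV. \<bar>Phat a j - P a j\<bar>) \<le> \<epsilon> * pplus I P"
  shows "(1 - \<epsilon>) * P a i \<le> Phat a i \<and> Phat a i \<le> (1 + \<epsilon>) * P a i"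
proof (cases "P a i = 0")
  case False
  then have "0 < P a i" using assms(3) by simp
  have "\<bar>Phat a i - P a i\<bar> \<le> (\<Sum>j\<in>UNIV. \<bar>Phat a j - P a j\<bar>)"
    by (rule member_le_sum) auto
  also have "\<dots> \<le> \<epsilon> * P a i"
    using l1 pplus_le[of I a P i] assms(1,2) \<open>0 < P a i\<close> \<open>0 \<le> \<epsilon>\<close> by (meson mult_left_mono order_trans)
  finally show ?thesis by (simp add: algebra_simps abs_le_iff)
qed (use assms(4) in simp)

lemma PTf_nonneg:
  assumes "\<forall>a\<in>I. 0 \<le> f a" "\<forall>a\<in>I. 0 \<le> P a i"
  shows "0 \<le> PTf I P f i"
  unfolding PTf_def using assms by (intro sum_nonneg) simp

lemma PTf_scaled_le:
  assumes "\<forall>a\<in>I. 0 \<le> f a" "\<forall>a\<in>I. \<gamma> * P a i \<le> Phat a i"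
  shows "\<gamma> * PTf I P f i \<le> PTf I Phat f i"
  unfolding PTf_def sum_distrib_left
proof (rule sum_mono)
  fix a assume "a \<in> I"
  then show "\<gamma> * (f a * P a i) \<le> f a * Phat a i"
    using assms mult_left_mono[of "\<gamma> * P a i" "Phat a i" "f a"] by (simp add: algebra_simps)
qed

lemma inv_sqrt_nonneg: "0 \<le> inv_sqrt y"
  unfolding inv_sqrt_def by simp

lemma scaled_ratio_le:
  fixes p ph m mh s sh \<alpha> \<beta> \<gamma> :: real
  assumes "0 \<le> ph" "ph \<le> \<alpha> * p" "0 \<le> mh" "mh \<le> \<beta> * m" "0 < s" "\<gamma> * s \<le> sh" "0 < \<gamma>"
  shows "ph * sqrt mh / sqrt sh \<le> \<alpha> * sqrt (\<beta> / \<gamma>) * (p * sqrt m / sqrt s)"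
proof -
  have "0 \<le> \<alpha> * p" using assms by linarith
  have num: "ph * sqrt mh \<le> (\<alpha> * p) * sqrt (\<beta> * m)"
    using assms by (intro mult_mono) auto
  have den: "sqrt (\<gamma> * s) \<le> sqrt sh" using assms by simp
  have "ph * sqrt mh / sqrt sh \<le> (\<alpha> * p) * sqrt (\<beta> * m) / sqrt (\<gamma> * s)"
    using num den assms \<open>0 \<le> \<alpha> * p\<close> by (intro frac_le) auto
  also have "\<dots> = \<alpha> * sqrt (\<beta> / \<gamma>) * (p * sqrt m / sqrt s)"
    by (simp add: real_sqrt_mult real_sqrt_divide)
  finally show ?thesis .
qed

lemma scaled_inv_sqrt_term_le:
  fixes p ph m mh s sh \<alpha> \<beta> \<gamma> :: real
  assumes "0 \<le> p" "0 \<le> ph" "ph \<le> \<alpha> * p" "0 \<le> m" "0 \<le> mh" "mh \<le> \<beta> * m"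
    and "0 \<le> s" "\<gamma> * s \<le> sh" "0 < \<gamma>" "0 \<le> \<alpha>" "0 \<le> \<beta>"
  shows "ereal (ph * sqrt mh) * inv_sqrt sh
           \<le> ereal (\<alpha> * sqrt (\<beta> / \<gamma>)) * (ereal (p * sqrt m) * inv_sqrt s)"
proof (cases "ph * sqrt mh = 0")
  case True
  have "0 \<le> ereal (p * sqrt m) * inv_sqrt s"
    using assms(1,4) inv_sqrt_nonneg by simp
  then have "0 \<le> ereal (\<alpha> * sqrt (\<beta> / \<gamma>)) * (ereal (p * sqrt m) * inv_sqrt s)"
    using assms(9-11) by (simp add: ereal_zero_le_0_iff)
  moreover have "ereal (ph * sqrt mh) = 0" using True by (simp add: zero_ereal_def)
  ultimately show ?thesis by (simp only: ereal_zero_mult)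
next
  case False
  then have "0 < ph" "0 < mh" using assms(2,5) by auto
  then have "0 < \<alpha> * p" "0 < \<beta> * m" using assms(3,6) by linarith+
  then have "0 < p" "0 < m" "0 < \<alpha>" "0 < \<beta>"
    using assms(1,4,10,11) by (auto simp: zero_less_mult_iff)
  show ?thesis
  proof (cases "s = 0")
    case True
    then show ?thesis using \<open>0 < p\<close> \<open>0 < m\<close> \<open>0 < \<alpha>\<close> \<open>0 < \<beta>\<close> \<open>0 < \<gamma>\<close>
      by (simp add: inv_sqrt_def)
  next
    case False
    then have "0 < s" using assms(7) by simp
    then have "0 < sh" using assms(8,9) by (smt (verit) mult_pos_pos)
    have "inv_sqrt sh = ereal (1 / sqrt sh)" "inv_sqrt s = ereal (1 / sqrt s)"
      using \<open>0 < s\<close> \<open>0 < sh\<close> by (simp_all add: inv_sqrt_def)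
    then show ?thesis
      using scaled_ratio_le[OF assms(2,3,5,6) \<open>0 < s\<close> assms(8,9)] by simp
  qed
qed

definition obj_row :: "intervention set \<Rightarrow> (intervention \<Rightarrow> 's::finite \<Rightarrow> real)
                   \<Rightarrow> ('s \<Rightarrow> real) \<Rightarrow> (intervention \<Rightarrow> real) \<Rightarrow> intervention \<Rightarrow> ereal" where
  "obj_row I P m f a = (\<Sum>i\<in>UNIV. ereal (P a i * sqrt (m i)) * inv_sqrt (PTf I P f i))"

lemma obj_eq_Max_obj_row: "obj I P m f = Max ((\<lambda>a. \<bar>obj_row I P m f a\<bar>) ` I)"
  unfolding obj_def obj_row_def ..

lemma obj_row_nonneg:
  assumes "\<forall>i. 0 \<le> P a i" "\<forall>i. 0 \<le> m i"
  shows "0 \<le> obj_row I P m f a"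
  unfolding obj_row_def using assms inv_sqrt_nonneg by (intro sum_nonneg) simp

lemma obj_nonneg:
  assumes "finite I" "a \<in> I"
  shows "0 \<le> obj I P m f"
  unfolding obj_eq_Max_obj_row using assms
  by (meson Max_ge abs_ereal_pos finite_imageI image_eqI order_trans)

lemma obj_le_scaled:
  assumes fin: "finite I" and ne: "I \<noteq> {}" and f_nonneg: "\<forall>a\<in>I. 0 \<le> f a"
    and P_bounds: "\<forall>a\<in>I. \<forall>i. 0 \<le> P a i \<and> \<gamma> * P a i \<le> Phat a i \<and> Phat a i \<le> \<alpha> * P a i"
    and m_bounds: "\<forall>i. 0 \<le> m i \<and> 0 \<le> mh i \<and> mh i \<le> \<beta> * m i"
    and "0 < \<gamma>" "0 \<le> \<alpha>" "0 \<le> \<beta>"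
  shows "obj I Phat mh f \<le> ereal (\<alpha> * sqrt (\<beta> / \<gamma>)) * obj I P m f"
  unfolding obj_eq_Max_obj_row
proof (rule Max.boundedI)
  let ?c = "ereal (\<alpha> * sqrt (\<beta> / \<gamma>))"
  fix y assume "y \<in> (\<lambda>a. \<bar>obj_row I Phat mh f a\<bar>) ` I"
  then obtain a where a: "a \<in> I" and y: "y = \<bar>obj_row I Phat mh f a\<bar>" by blast
  have P_a: "\<forall>i. 0 \<le> P a i" and Phat_a: "\<forall>i. 0 \<le> Phat a i"
    using P_bounds a \<open>0 < \<gamma>\<close> by (meson order_trans mult_nonneg_nonneg less_imp_le)+
  have "obj_row I Phat mh f a \<le> (\<Sum>i\<in>UNIV. ?c * (ereal (P a i * sqrt (m i)) * inv_sqrt (PTf I P f i)))"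
    unfolding obj_row_def
  proof (rule sum_mono)
    fix i
    show "ereal (Phat a i * sqrt (mh i)) * inv_sqrt (PTf I Phat f i)
            \<le> ?c * (ereal (P a i * sqrt (m i)) * inv_sqrt (PTf I P f i))"
      using P_bounds Phat_a a m_bounds \<open>0 < \<gamma>\<close> \<open>0 \<le> \<alpha>\<close> \<open>0 \<le> \<beta>\<close>
        PTf_nonneg[OF f_nonneg, of P i] PTf_scaled_le[OF f_nonneg, of \<gamma> P i Phat]
      by (intro scaled_inv_sqrt_term_le) auto
  qed
  also have "\<dots> = ?c * obj_row I P m f a"
    unfolding obj_row_def using P_a m_bounds inv_sqrt_nonneg
    by (intro sum_ereal_right_distrib[symmetric]) simp
  also have "\<dots> = ?c * \<bar>obj_row I P m f a\<bar>"
    using obj_row_nonneg[of P a m I f] P_a m_bounds by simp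
  also have "\<dots> \<le> ?c * Max ((\<lambda>a. \<bar>obj_row I P m f a\<bar>) ` I)"
    using \<open>0 < \<gamma>\<close> \<open>0 \<le> \<alpha>\<close> \<open>0 \<le> \<beta>\<close>
    by (intro ereal_mult_left_mono Max_ge finite_imageI imageI fin a) simp
  finally show "y \<le> ?c * Max ((\<lambda>a. \<bar>obj_row I P m f a\<bar>) ` I)"
    using y obj_row_nonneg[of Phat a mh I f] Phat_a m_bounds by simp
qed (use fin ne in auto)

lemma le_cmult_INF_ereal:
  fixes X :: ereal and g :: "'a \<Rightarrow> ereal"
  assumes "0 < c" and le: "\<And>x. x \<in> S \<Longrightarrow> X \<le> ereal c * g x"
  shows "X \<le> ereal c * (INF x\<in>S. g x)"
proof -
  have inv: "ereal c * ereal (1 / c) = 1" using \<open>0 < c\<close> by (simp add: one_ereal_def)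
  have "X * ereal (1 / c) \<le> g x" if "x \<in> S" for x
  proof -
    have "X * ereal (1 / c) \<le> ereal c * g x * ereal (1 / c)"
      using le[OF that] \<open>0 < c\<close> by (intro ereal_mult_right_mono) auto
    also have "\<dots> = g x * (ereal c * ereal (1 / c))" by (simp only: mult_ac)
    also have "\<dots> = g x" by (simp only: inv mult_1_right)
    finally show ?thesis .
  qed
  then have "ereal c * (X * ereal (1 / c)) \<le> ereal c * (INF x\<in>S. g x)"
    using \<open>0 < c\<close> by (intro ereal_mult_left_mono INF_greatest) auto
  also have "ereal c * (X * ereal (1 / c)) = X * (ereal c * ereal (1 / c))" by (simp only: mult_ac)
  also have "\<dots> = X" by (simp only: inv mult_1_right)
  finally show ?thesis .
qed

lemma ereal_power2_le_cmult:
  fixes X L :: ereal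
  assumes "0 \<le> X" "X \<le> ereal c * L"
  shows "X ^ 2 \<le> ereal (c ^ 2) * L ^ 2"
proof -
  have "X * X \<le> (ereal c * L) * (ereal c * L)"
    using assms by (intro ereal_mult_mono) auto
  then show ?thesis by (simp add: power2_eq_square mult_ac)
qed

theorem lemma3:
  fixes n :: nat
    and q :: "'s::finite \<Rightarrow> nat \<Rightarrow> real"
    and P Phat :: "intervention \<Rightarrow> 's \<Rightarrow> real"
    and mhat :: "'s \<Rightarrow> nat"
    and fhat :: "intervention \<Rightarrow> real"
  assumes n_pos: "1 \<le> n"
    and q_prob: "\<forall>i j. j < n \<longrightarrow> 0 \<le> q i j \<and> q i j \<le> 1"
    and P_nonneg: "\<forall>a\<in>interventions n. \<forall>i. 0 \<le> P a i"
    and P_stoch: "\<forall>a\<in>interventions n. (\<Sum>i\<in>UNIV. P a i) = 1"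
    and Phat_nonneg: "\<forall>a\<in>interventions n. \<forall>i. 0 \<le> Phat a i"
    and Phat_supp: "\<forall>a\<in>interventions n. \<forall>i. P a i = 0 \<longrightarrow> Phat a i = 0"
    and E1: "\<forall>a\<in>interventions n.
               (\<Sum>i\<in>UNIV. \<bar>Phat a i - P a i\<bar>) \<le> pplus (interventions n) P / 3"
    and E3: "\<forall>i. 2/3 * real (mpar (q i) n) \<le> real (mhat i)
               \<and> real (mhat i) \<le> 2 * real (mpar (q i) n)"
    and fhat_mem: "fhat \<in> freq_simplex (interventions n)"
    and fhat_opt: "obj (interventions n) Phat (\<lambda>i. real (mhat i)) fhat
                   = (INF f\<in>freq_simplex (interventions n).
                        obj (interventions n) Phat (\<lambda>i. real (mhat i)) f)"
  shows "(obj (interventions n) Phat (\<lambda>i. real (mhat i)) fhat) ^ 2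
           \<le> 8 * lambda_par (interventions n) P (\<lambda>i. real (mpar (q i) n))"
proof -
  define I where "I = interventions n"
  define mh where "mh = (\<lambda>i. real (mhat i))"
  define m where "m = (\<lambda>i. real (mpar (q i) n))"
  define c :: real where "c = 4/3 * sqrt (2 / (2/3))"
  have "finite I" "Obs \<in> I" unfolding I_def by (simp_all add: finite_interventions Obs_in_interventions)
  have P_bounds: "\<forall>a\<in>I. \<forall>i. 0 \<le> P a i \<and> 2/3 * P a i \<le> Phat a i \<and> Phat a i \<le> 4/3 * P a i"
    using entry_bounds_of_l1_close[OF \<open>finite I\<close>, of _ P _ Phat "1/3"] P_nonneg Phat_supp E1
    unfolding I_def by auto
  have "obj I Phat mh f \<le> ereal c * obj I P m f" if "f \<in> freq_simplex I" for f
    using that P_bounds E3 \<open>finite I\<close> \<open>Obs \<in> I\<close> unfolding c_def m_def mh_def freq_simplex_def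
    by (intro obj_le_scaled) auto
  then have "obj I Phat mh fhat \<le> ereal c * (INF f\<in>freq_simplex I. obj I P m f)"
    using fhat_opt unfolding I_def mh_def
    by (intro le_cmult_INF_ereal) (auto simp: c_def intro: INF_lower2)
  then have "(obj I Phat mh fhat) ^ 2 \<le> ereal (c ^ 2) * lambda_par I P m"
    unfolding lambda_par_def using obj_nonneg[OF \<open>finite I\<close> \<open>Obs \<in> I\<close>]
    by (rule ereal_power2_le_cmult[rotated])
  also have "\<dots> \<le> 8 * lambda_par I P m"
  proof (rule ereal_mult_right_mono)
    show "ereal (c ^ 2) \<le> 8" unfolding c_def by (simp add: power_mult_distrib power_divide)
    show "0 \<le> lambda_par I P m"
      unfolding lambda_par_def power2_eq_square by (simp add: ereal_zero_le_0_iff linear)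
  qed
  finally show ?thesis unfolding I_def mh_def m_def .
qed

end
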